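(* Let $d\in\mathbb{N}$ and let $\mathcal{P}$ be a unit hypercube partition of $\mathbb{R}^{d}$. Then there exists $\vec{p}\in\mathbb{R}^{d}$ such that $|\mathcal{N}_{\overline{0}}(\vec{p})|\geq d+1$. Furthermore, $\mathcal{P}$ contains a $(d+1)$-clique.
   Context: A unit hypercube is a set $\vec{a}+[0,1)^d$ with $\vec{a}\in\mathbb{R}^d$; a unit hypercube partition of $\mathbb{R}^d$ is a partition all of whose members are unit hypercubes. For a partition $\mathcal{P}$ of $\mathbb{R}^d$ and $\vec{p}\in\mathbb{R}^d$, $\mathcal{N}_{\overline{0}}(\vec{p})=\{X\in\mathcal{P}:\vec{p}\in\overline{X}\}$, where $\overline{X}$ is the closure (in the usual topology). Two members $X,Y\in\mathcal{P}$ are adjacent if $\overline{X}\cap\overline{Y}\neq\emptyset$; an $n$-clique in $\mathcal{P}$ is a set of $n$ distinct members that are pairwise adjacent. *)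

theory Defs
  imports "HOL-Analysis.Analysis"
begin

text \<open>Points of R^d are represented as functions nat => real vanishing outside {..<d};
  nat => real carries the product topology (HOL-Analysis Function_Topology), and
  the copy of R^d is a closed subspace homeomorphic to the Euclidean R^d.\<close>

definition Rd :: "nat \<Rightarrow> (nat \<Rightarrow> real) set" where
  "Rd d = {x. \<forall>i\<ge>d. x i = 0}"

definition unit_cube :: "nat \<Rightarrow> (nat \<Rightarrow> real) \<Rightarrow> (nat \<Rightarrow> real) set" where
  "unit_cube d a = {x \<in> Rd d. \<forall>i<d. a i \<le> x i \<and> x i < a i + 1}"

definition is_unit_cube :: "nat \<Rightarrow> (nat \<Rightarrow> real) set \<Rightarrow> bool" where
  "is_unit_cube d X \<longleftrightarrow> (\<exists>a\<in>Rd d. X = unit_cube d a)"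

definition is_partition_of :: "'a set set \<Rightarrow> 'a set \<Rightarrow> bool" where
  "is_partition_of P S \<longleftrightarrow> (\<forall>X\<in>P. X \<noteq> {}) \<and> \<Union>P = S \<and>
     (\<forall>X\<in>P. \<forall>Y\<in>P. X \<noteq> Y \<longrightarrow> X \<inter> Y = {})"

definition unit_cube_partition :: "nat \<Rightarrow> (nat \<Rightarrow> real) set set \<Rightarrow> bool" where
  "unit_cube_partition d P \<longleftrightarrow> is_partition_of P (Rd d) \<and> (\<forall>X\<in>P. is_unit_cube d X)"

definition closed_nbhd :: "'a::topological_space set set \<Rightarrow> 'a \<Rightarrow> 'a set set" where
  "closed_nbhd P p = {X \<in> P. p \<in> closure X}"

definition adjacent :: "'a::topological_space set \<Rightarrow> 'a set \<Rightarrow> bool" where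
  "adjacent X Y \<longleftrightarrow> closure X \<inter> closure Y \<noteq> {}"

definition is_clique :: "'a::topological_space set set \<Rightarrow> nat \<Rightarrow> 'a set set \<Rightarrow> bool" where
  "is_clique P n C \<longleftrightarrow> C \<subseteq> P \<and> finite C \<and> card C = n \<and>
     (\<forall>X\<in>C. \<forall>Y\<in>C. adjacent X Y)"

end

theory Submission
  imports Defs
begin

text \<open>Let \<open>X\<close> be any cube of the partition, with corner \<open>p\<close>. Stepping from \<open>p\<close> a
  distance \<open>t \<in> (0, 1)\<close> in the direction \<open>-e\<^sub>i\<close> leaves \<open>X\<close>, and the cube entered cannot
  contain \<open>p\<close>, so its \<open>i\<close>-th interval ends at or before \<open>p i\<close>. It ends exactly at \<open>p i\<close>:
  otherwise a shorter step would enter a second cube, overlapping the first at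
  \<open>p - e\<^sub>i\<close>. Hence for every \<open>i < d\<close> there is a cube with \<open>p\<close> in its closure whose
  \<open>i\<close>-th interval is \<open>[p i - 1, p i)\<close>; these \<open>d\<close> cubes and \<open>X\<close> are pairwise distinct
  and pairwise touch at \<open>p\<close>.\<close>

lemma Rd_update: "p \<in> Rd d \<Longrightarrow> i < d \<Longrightarrow> p(i := v) \<in> Rd d"
  by (simp add: Rd_def)

lemma PiE_UNIV_eq_Rd:
  "PiE UNIV (\<lambda>i. if i < d then I i else {0}) = {x \<in> Rd d. \<forall>i<d. x i \<in> I i}"
  (is "?A = ?B")
proof (rule set_eqI)
  fix x :: "nat \<Rightarrow> real"
  have "x \<in> ?A \<longleftrightarrow> (\<forall>i. x i \<in> (if i < d then I i else {0}))"
    by (simp add: PiE_UNIV_domain Pi_iff)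
  also have "\<dots> \<longleftrightarrow> x \<in> ?B"
    by (simp add: Rd_def split: if_split) (metis not_less)
  finally show "x \<in> ?A \<longleftrightarrow> x \<in> ?B" .
qed

lemma unit_cube_eq_PiE:
  "unit_cube d a = PiE UNIV (\<lambda>i. if i < d then {a i..<a i + 1} else {0})"
  by (simp add: PiE_UNIV_eq_Rd unit_cube_def)

lemma closure_unit_cube:
  "closure (unit_cube d a) = {x \<in> Rd d. \<forall>i<d. a i \<le> x i \<and> x i \<le> a i + 1}"
proof -
  have "closure (unit_cube d a) = euclidean closure_of unit_cube d a"
    by simp
  also have "\<dots> = product_topology (\<lambda>i. euclidean) UNIV closure_of
      PiE UNIV (\<lambda>i. if i < d then {a i..<a i + 1} else {0::real})"
    by (simp only: unit_cube_eq_PiE euclidean_product_topology)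
  also have "\<dots> = PiE UNIV (\<lambda>i. if i < d then {a i..a i + 1} else {0})"
    by (simp add: closure_of_product_topology if_distrib cong: if_cong)
  also have "\<dots> = {x \<in> Rd d. \<forall>i<d. a i \<le> x i \<and> x i \<le> a i + 1}"
    by (simp add: PiE_UNIV_eq_Rd)
  finally show ?thesis .
qed

lemma closed_nbhd_is_clique:
  assumes "S \<subseteq> closed_nbhd P p" "finite S" "card S = n"
  shows "is_clique P n S"
  using assms unfolding is_clique_def adjacent_def closed_nbhd_def by blast

lemma unit_cube_partition_obtain_cube:
  assumes "unit_cube_partition d P" "x \<in> Rd d"
  obtains a where "a \<in> Rd d" "unit_cube d a \<in> P" "x \<in> unit_cube d a"
proof -
  obtain X where "X \<in> P" "x \<in> X"
    using assms unfolding unit_cube_partition_def is_partition_of_def by blast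
  moreover obtain a where "a \<in> Rd d" "X = unit_cube d a"
    using assms \<open>X \<in> P\<close> unfolding unit_cube_partition_def is_unit_cube_def by blast
  ultimately show thesis
    using that by blast
qed

lemma unit_cube_partition_unique:
  assumes "unit_cube_partition d P" "X \<in> P" "Y \<in> P" "x \<in> X" "x \<in> Y"
  shows "X = Y"
  using assms unfolding unit_cube_partition_def is_partition_of_def by blast

lemma corner_mem_unit_cube: "a \<in> Rd d \<Longrightarrow> a \<in> unit_cube d a"
  by (simp add: unit_cube_def)

lemma update_mem_unit_cube:
  assumes "p \<in> Rd d" "i < d" "\<forall>j<d. j \<noteq> i \<longrightarrow> b j \<le> p j \<and> p j < b j + 1"
    and "b i \<le> v" "v < b i + 1"
  shows "p(i := v) \<in> unit_cube d b"
  using assms by (simp add: unit_cube_def Rd_update)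

lemma cube_below_corner:
  assumes P: "unit_cube_partition d P"
    and X: "unit_cube d p \<in> P" "p \<in> Rd d" and "i < d" "0 < t"
    and Y: "unit_cube d c \<in> P" "p(i := p i - t) \<in> unit_cube d c"
  shows "c i + 1 \<le> p i"
proof (rule ccontr)
  assume "\<not> c i + 1 \<le> p i"
  have "\<forall>j<d. c j \<le> p j \<and> p j < c j + 1"
  proof (intro allI impI)
    fix j assume "j < d"
    with Y(2) \<open>0 < t\<close> \<open>\<not> c i + 1 \<le> p i\<close> show "c j \<le> p j \<and> p j < c j + 1"
      by (cases "j = i") (auto simp: unit_cube_def)
  qed
  then have "p \<in> unit_cube d c"
    using \<open>p \<in> Rd d\<close> by (simp add: unit_cube_def)
  moreover have "p \<in> unit_cube d p"
    using \<open>p \<in> Rd d\<close> by (rule corner_mem_unit_cube)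
  ultimately have "unit_cube d c = unit_cube d p"
    using unit_cube_partition_unique[OF P Y(1) X(1)] by blast
  with Y(2) have "p(i := p i - t) \<in> unit_cube d p"
    by simp
  then have "p i \<le> (p(i := p i - t)) i"
    using \<open>i < d\<close> unfolding unit_cube_def by blast
  with \<open>0 < t\<close> show False
    by simp
qed

lemma lower_neighbour_cube:
  assumes P: "unit_cube_partition d P"
    and X: "unit_cube d p \<in> P" "p \<in> Rd d" and "i < d"
  obtains b where "unit_cube d b \<in> P" "b i = p i - 1"
    "\<forall>j<d. j \<noteq> i \<longrightarrow> b j \<le> p j \<and> p j < b j + 1"
proof -
  define q where "q t = p(i := p i - t)" for t
  have q_Rd: "q t \<in> Rd d" for t
    using X(2) \<open>i < d\<close> by (simp add: q_def Rd_update)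
  obtain b where Y: "unit_cube d b \<in> P" "q (1/2) \<in> unit_cube d b"
    using unit_cube_partition_obtain_cube[OF P q_Rd] by blast
  have b_upper: "b i + 1 \<le> p i"
    using cube_below_corner[OF P X \<open>i < d\<close> _ Y(1) Y(2)[unfolded q_def]] by simp
  have b_other: "\<forall>j<d. j \<noteq> i \<longrightarrow> b j \<le> p j \<and> p j < b j + 1"
    using Y(2) by (auto simp: q_def unit_cube_def)
  have b_lower: "p i - 3/2 < b i"
    using Y(2) \<open>i < d\<close> by (auto simp: q_def unit_cube_def)
  have "b i = p i - 1"
  proof (rule ccontr)
    assume "b i \<noteq> p i - 1"
    define s where "s = p i - 1 - b i"
    have s: "0 < s" "s < 1/2"
      using \<open>b i \<noteq> p i - 1\<close> b_upper b_lower by (auto simp: s_def)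
    obtain c where Z: "unit_cube d c \<in> P" "q s \<in> unit_cube d c"
      using unit_cube_partition_obtain_cube[OF P q_Rd] by blast
    have "c i + 1 \<le> p i"
      using cube_below_corner[OF P X \<open>i < d\<close> s(1) Z(1) Z(2)[unfolded q_def]] .
    moreover have "b i < c i"
      using Z(2) \<open>i < d\<close> by (auto simp: q_def s_def unit_cube_def)
    ultimately have "q 1 \<in> unit_cube d b" "q 1 \<in> unit_cube d c"
      using Y(2) Z(2) b_upper b_lower q_Rd by (auto simp: q_def unit_cube_def)
    then have "unit_cube d c = unit_cube d b"
      using unit_cube_partition_unique[OF P Z(1) Y(1)] by blast
    moreover have "q s \<notin> unit_cube d b"
      using \<open>i < d\<close> by (auto simp: q_def s_def unit_cube_def)
    ultimately show False
      using Z(2) by simp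
  qed
  with Y(1) b_other show thesis
    using that by blast
qed

lemma card_closed_nbhd_corner:
  assumes P: "unit_cube_partition d P"
    and X: "unit_cube d p \<in> P" "p \<in> Rd d"
  shows "\<exists>S\<subseteq>closed_nbhd P p. finite S \<and> card S = d + 1"
proof -
  have "\<forall>i\<in>{..<d}. \<exists>c. unit_cube d c \<in> P \<and> c i = p i - 1 \<and>
      (\<forall>j<d. j \<noteq> i \<longrightarrow> c j \<le> p j \<and> p j < c j + 1)"
  proof
    fix i assume "i \<in> {..<d}"
    then have "i < d"
      by simp
    then show "\<exists>c. unit_cube d c \<in> P \<and> c i = p i - 1 \<and>
        (\<forall>j<d. j \<noteq> i \<longrightarrow> c j \<le> p j \<and> p j < c j + 1)"
      by (rule lower_neighbour_cube[OF P X]) blast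
  qed
  then obtain b where b: "\<forall>i\<in>{..<d}. unit_cube d (b i) \<in> P \<and> b i i = p i - 1 \<and>
      (\<forall>j<d. j \<noteq> i \<longrightarrow> b i j \<le> p j \<and> p j < b i j + 1)"
    by (rule bchoice[THEN exE])
  define Y where "Y i = unit_cube d (b i)" for i
  have p_closure: "p \<in> closure (Y i)" if "i < d" for i
  proof -
    from b \<open>i < d\<close> have bi: "b i i = p i - 1"
        "\<forall>j<d. j \<noteq> i \<longrightarrow> b i j \<le> p j \<and> p j < b i j + 1"
      by simp_all
    have "b i j \<le> p j \<and> p j \<le> b i j + 1" if "j < d" for j
      using bi that by (cases "j = i") (auto simp: less_imp_le)
    then show ?thesis
      using \<open>p \<in> Rd d\<close> by (simp add: Y_def closure_unit_cube)
  qed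
  have not_in_Y: "x \<notin> Y i" if "i < d" "x i = p i" for x i
  proof
    assume "x \<in> Y i"
    then have "x i < b i i + 1"
      using \<open>i < d\<close> by (simp add: Y_def unit_cube_def)
    with b \<open>i < d\<close> \<open>x i = p i\<close> show False
      by simp
  qed
  have p_in_X: "p \<in> unit_cube d p"
    using \<open>p \<in> Rd d\<close> by (rule corner_mem_unit_cube)
  have X_not_Y: "unit_cube d p \<notin> Y ` {..<d}"
    using not_in_Y p_in_X by blast
  have "inj_on Y {..<d}"
  proof (rule inj_onI, rule ccontr)
    fix i k assume ik: "i \<in> {..<d}" "k \<in> {..<d}" "Y i = Y k" "i \<noteq> k"
    define z where "z = p(k := p k - 1/2)"
    have "z \<in> Y k"
      unfolding Y_def z_def using b ik X(2) by (intro update_mem_unit_cube) auto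
    moreover have "z \<notin> Y i"
      using not_in_Y[of i z] ik by (simp add: z_def)
    ultimately show False
      using ik by simp
  qed
  define S where "S = insert (unit_cube d p) (Y ` {..<d})"
  have "S \<subseteq> P"
    using X(1) b by (auto simp: S_def Y_def)
  moreover have "p \<in> closure Z" if "Z \<in> S" for Z
    using that p_closure p_in_X closure_subset by (auto simp: S_def)
  ultimately have "S \<subseteq> closed_nbhd P p"
    by (auto simp: closed_nbhd_def)
  moreover have "card S = d + 1"
    using X_not_Y \<open>inj_on Y {..<d}\<close> by (simp add: S_def card_image)
  moreover have "finite S"
    by (simp add: S_def)
  ultimately show ?thesis
    by blast
qed

theorem mainTheorem2:
  fixes d :: nat and P :: "(nat \<Rightarrow> real) set set"
  assumes "unit_cube_partition d P"
  shows "(\<exists>p\<in>Rd d. \<exists>S\<subseteq>closed_nbhd P p. finite S \<and> card S = d + 1)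
         \<and> (\<exists>C. is_clique P (d + 1) C)"
proof -
  have "(\<lambda>_. 0) \<in> Rd d"
    by (simp add: Rd_def)
  then obtain p where "p \<in> Rd d" "unit_cube d p \<in> P"
    using unit_cube_partition_obtain_cube[OF assms] by blast
  then obtain S where "S \<subseteq> closed_nbhd P p" "finite S" "card S = d + 1"
    using card_closed_nbhd_corner[OF assms] by blast
  then show ?thesis
    using \<open>p \<in> Rd d\<close> closed_nbhd_is_clique by blast
qed

end
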